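(* (i) For all configurations $\gamma,\gamma'$ with $\gamma\to_d\gamma'$: $\gamma^{\bot}\le_d\gamma'^{\bot}$ and $\gamma'^{\top}\le_d\gamma^{\top}$. (ii) For all configurations $\gamma_0,\gamma$ such that $\gamma$ is reachable from $\gamma_0$ by a finite number (possibly zero) of d-steps: $\gamma_0^{\bot}\le_d\gamma\le_d\gamma_0^{\top}$.
   Context: Let $G$ be a finite, connected, undirected graph with node set $V$ and a distinguished node $r$ (the root); $\mathrm{dist}(p,r)$ denotes graph distance. Each node $p$ has a fixed ordered list $N(p)$ of its neighbours. A configuration $\gamma$ assigns to each node $p$ a value $\gamma.p.d\in\mathbb N$ and a neighbour $\gamma.p.par\in N(p)$. For a non-root node $p$ let $Dist_p(\gamma)=\min\{\gamma.q.d+1 : q\in N(p)\}$. Algorithm BFS: Root enabled iff $\gamma.r.d\neq 0$, executing sets $r.d:=0$. Non-root $p$, action CD: enabled iff $\gamma.p.d\ne Dist_p(\gamma)$, executing sets $p.d:=Dist_p(\gamma)$. Non-root $p$, action CP: enabled iff $\gamma.p.d=Dist_p(\gamma)$ and $\gamma.q_0.d+1\neq\gamma.p.d$ with $q_0=\gamma.p.par$; executing sets $p.par$ to the first $q\in N(p)$ with $\gamma.q.d+1=\gamma.p.d$. A step $\gamma\to\gamma'$ holds iff a nonempty set $S$ of enabled nodes simultaneously execute their enabled action (evaluated in $\gamma$), others unchanged. A d-step $\gamma\to_d\gamma'$ is a step with $\gamma.r.d=\gamma'.r.d$ and $\gamma.p.d\neq\gamma'.p.d$ for some $p$. $\min_d\gamma=\min\{\gamma.q.d:q\in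 V\}$. Bottom/top configurations: equal to $\gamma$ except $\gamma^{\bot}.p.d=\min_d\gamma$ for all $p$; $\gamma^{\top}.r.d=\gamma.r.d$ and for $p\neq r$, $\gamma^{\top}.p.d=\max\big(\gamma.p.d,\;1+\min\{\gamma^{\top}.q.d : q \text{ adjacent to } p,\ \mathrm{dist}(p,r)=1+\mathrm{dist}(q,r)\}\big)$. $\gamma_1\le_d\gamma_2$ iff $\gamma_1.q.d\le\gamma_2.q.d$ for all $q\in V$. *)

theory Defs
  imports Main
begin

definition adj_rel :: "('v \<Rightarrow> 'v list) \<Rightarrow> ('v \<times> 'v) set" where
  "adj_rel N = {(p, q). q \<in> set (N p)}"

definition bfs_graph :: "'v set \<Rightarrow> ('v \<Rightarrow> 'v list) \<Rightarrow> 'v \<Rightarrow> bool" where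
  "bfs_graph V N r \<longleftrightarrow>
     finite V \<and> r \<in> V \<and>
     (\<forall>p\<in>V. set (N p) \<subseteq> V \<and> distinct (N p) \<and> p \<notin> set (N p)) \<and>
     (\<forall>p\<in>V. \<forall>q\<in>V. q \<in> set (N p) \<longleftrightarrow> p \<in> set (N q)) \<and>
     (\<forall>p\<in>V. (p, r) \<in> (adj_rel N)\<^sup>*)"

definition gdist :: "('v \<Rightarrow> 'v list) \<Rightarrow> 'v \<Rightarrow> 'v \<Rightarrow> nat" where
  "gdist N p q = (LEAST n. (p, q) \<in> (adj_rel N) ^^ n)"

record 'v config =
  cd :: "'v \<Rightarrow> nat"
  cpar :: "'v \<Rightarrow> 'v"

definition is_config :: "'v set \<Rightarrow> ('v \<Rightarrow> 'v list) \<Rightarrow> 'v config \<Rightarrow> bool" where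
  "is_config V N \<gamma> \<longleftrightarrow> (\<forall>p\<in>V. cpar \<gamma> p \<in> set (N p))"

definition Dist :: "('v \<Rightarrow> 'v list) \<Rightarrow> 'v config \<Rightarrow> 'v \<Rightarrow> nat" where
  "Dist N \<gamma> p = Min ((\<lambda>q. cd \<gamma> q + 1) ` set (N p))"

definition enabled :: "('v \<Rightarrow> 'v list) \<Rightarrow> 'v \<Rightarrow> 'v config \<Rightarrow> 'v \<Rightarrow> bool" where
  "enabled N r \<gamma> p \<longleftrightarrow>
     (if p = r then cd \<gamma> r \<noteq> 0
      else cd \<gamma> p \<noteq> Dist N \<gamma> p \<or>
           (cd \<gamma> p = Dist N \<gamma> p \<and> cd \<gamma> (cpar \<gamma> p) + 1 \<noteq> cd \<gamma> p))"

definition exec :: "('v \<Rightarrow> 'v list) \<Rightarrow> 'v \<Rightarrow> 'v config \<Rightarrow> 'v \<Rightarrow> nat \<times> 'v" where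
  "exec N r \<gamma> p =
     (if p = r then (0, cpar \<gamma> p)
      else if cd \<gamma> p \<noteq> Dist N \<gamma> p then (Dist N \<gamma> p, cpar \<gamma> p)
      else (cd \<gamma> p, the (find (\<lambda>q. cd \<gamma> q + 1 = cd \<gamma> p) (N p))))"

definition step :: "'v set \<Rightarrow> ('v \<Rightarrow> 'v list) \<Rightarrow> 'v \<Rightarrow> 'v config \<Rightarrow> 'v config \<Rightarrow> bool" where
  "step V N r \<gamma> \<gamma>' \<longleftrightarrow>
     (\<exists>S. S \<noteq> {} \<and> S \<subseteq> V \<and> (\<forall>p\<in>S. enabled N r \<gamma> p) \<and>
          (\<forall>p\<in>S. (cd \<gamma>' p, cpar \<gamma>' p) = exec N r \<gamma> p) \<and>
          (\<forall>p. p \<notin> S \<longrightarrow> cd \<gamma>' p = cd \<gamma> p \<and> cpar \<gamma>' p = cpar \<gamma> p))"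

definition dstep :: "'v set \<Rightarrow> ('v \<Rightarrow> 'v list) \<Rightarrow> 'v \<Rightarrow> 'v config \<Rightarrow> 'v config \<Rightarrow> bool" where
  "dstep V N r \<gamma> \<gamma>' \<longleftrightarrow>
     step V N r \<gamma> \<gamma>' \<and> cd \<gamma> r = cd \<gamma>' r \<and> (\<exists>p\<in>V. cd \<gamma> p \<noteq> cd \<gamma>' p)"

definition min_d :: "'v set \<Rightarrow> 'v config \<Rightarrow> nat" where
  "min_d V \<gamma> = Min (cd \<gamma> ` V)"

definition bot_cfg :: "'v set \<Rightarrow> 'v config \<Rightarrow> 'v config" where
  "bot_cfg V \<gamma> = \<gamma>\<lparr>cd := (\<lambda>p. min_d V \<gamma>)\<rparr>"

primrec top_lvl :: "('v \<Rightarrow> 'v list) \<Rightarrow> 'v \<Rightarrow> 'v config \<Rightarrow> nat \<Rightarrow> 'v \<Rightarrow> nat" where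
  "top_lvl N r \<gamma> 0 p = cd \<gamma> p"
| "top_lvl N r \<gamma> (Suc k) p =
     max (cd \<gamma> p) (1 + Min {top_lvl N r \<gamma> k q | q. q \<in> set (N p) \<and> gdist N q r = k})"

definition top_cfg :: "('v \<Rightarrow> 'v list) \<Rightarrow> 'v \<Rightarrow> 'v config \<Rightarrow> 'v config" where
  "top_cfg N r \<gamma> = \<gamma>\<lparr>cd := (\<lambda>p. top_lvl N r \<gamma> (gdist N p r) p)\<rparr>"

definition le_d :: "'v set \<Rightarrow> 'v config \<Rightarrow> 'v config \<Rightarrow> bool" where
  "le_d V \<gamma>1 \<gamma>2 \<longleftrightarrow> (\<forall>q\<in>V. cd \<gamma>1 q \<le> cd \<gamma>2 q)"

end

theory Submission
  imports Defs
begin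

text \<open>A d-step changes the d-value of a node only by the rule \<open>p.d := Dist\<^sub>p\<close>, and
  \<open>Dist\<^sub>p\<close> is one plus the d-value of some neighbour. Hence no d-value can fall below the
  old minimum, which gives the bottom bound. For the top bound, induct on the distance
  level k: if every node of level k has top value in \<open>\<gamma>'\<close> at most that in \<open>\<gamma>\<close>, then for
  a node p of level k+1 the new value \<open>Dist\<^sub>p\<close> is bounded by one plus the top value of
  any neighbour on level k, so it never exceeds p's old top value. Part (ii) follows by
  induction along the d-steps, together with \<open>\<gamma>\<^sup>\<bottom> \<le> \<gamma> \<le> \<gamma>\<^sup>\<top>\<close>.\<close>

lemma bfs_graph_finite: "bfs_graph V N r \<Longrightarrow> finite V"
  by (simp add: bfs_graph_def)

lemma bfs_graph_nbr_in_V: "bfs_graph V N r \<Longrightarrow> p \<in> V \<Longrightarrow> q \<in> set (N p) \<Longrightarrow> q \<in> V"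
  by (auto simp: bfs_graph_def)

lemma bfs_graph_reaches_root: "bfs_graph V N r \<Longrightarrow> p \<in> V \<Longrightarrow> (p, r) \<in> (adj_rel N)\<^sup>*"
  by (simp add: bfs_graph_def)

lemma bfs_graph_nonroot_has_nbr:
  assumes "bfs_graph V N r" "p \<in> V" "p \<noteq> r"
  shows "set (N p) \<noteq> {}"
proof -
  obtain q where "(p, q) \<in> adj_rel N"
    using bfs_graph_reaches_root[OF assms(1,2)] assms(3) by (metis converse_rtranclE)
  then show ?thesis by (auto simp: adj_rel_def)
qed

lemma gdist_relpow:
  assumes "bfs_graph V N r" "p \<in> V"
  shows "(p, r) \<in> adj_rel N ^^ gdist N p r"
proof -
  obtain n where "(p, r) \<in> adj_rel N ^^ n"
    using bfs_graph_reaches_root[OF assms] rtrancl_power by blast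
  then show ?thesis unfolding gdist_def by (rule LeastI)
qed

lemma gdist_le: "(p, r) \<in> adj_rel N ^^ n \<Longrightarrow> gdist N p r \<le> n"
  unfolding gdist_def by (rule Least_le)

lemma gdist_eq_0_imp_root:
  assumes "bfs_graph V N r" "p \<in> V" "gdist N p r = 0"
  shows "p = r"
  using gdist_relpow[OF assms(1,2)] assms(3) by simp

lemma gdist_Suc_imp_nbr:
  assumes G: "bfs_graph V N r" and p: "p \<in> V" and k: "gdist N p r = Suc k"
  obtains q where "q \<in> set (N p)" "gdist N q r = k"
proof -
  obtain q where pq: "(p, q) \<in> adj_rel N" and "(q, r) \<in> adj_rel N ^^ k"
    using gdist_relpow[OF G p] k relpow_Suc_D2[of p r k "adj_rel N"] by auto
  then have q: "q \<in> set (N p)" and le: "gdist N q r \<le> k"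
    by (auto simp: adj_rel_def intro: gdist_le)
  have "(p, r) \<in> adj_rel N ^^ Suc (gdist N q r)"
    using pq gdist_relpow[OF G bfs_graph_nbr_in_V[OF G p q]] by (rule relpow_Suc_I2)
  then have "Suc k \<le> Suc (gdist N q r)"
    using k gdist_le by metis
  with le q show thesis using that by simp
qed

lemma Dist_le: "q \<in> set (N p) \<Longrightarrow> Dist N \<gamma> p \<le> cd \<gamma> q + 1"
  unfolding Dist_def by (rule Min_le) auto

lemma Dist_attained:
  assumes "set (N p) \<noteq> {}"
  obtains q where "q \<in> set (N p)" "Dist N \<gamma> p = cd \<gamma> q + 1"
proof -
  have "Dist N \<gamma> p \<in> (\<lambda>q. cd \<gamma> q + 1) ` set (N p)"
    unfolding Dist_def using assms by (intro Min_in) auto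
  then show thesis using that by blast
qed

lemma dstep_cd_cases:
  assumes "dstep V N r \<gamma> \<gamma>'"
  shows "cd \<gamma>' p = cd \<gamma> p \<or> (p \<in> V \<and> p \<noteq> r \<and> cd \<gamma>' p = Dist N \<gamma> p)"
proof -
  obtain S where S: "S \<subseteq> V" "\<forall>p\<in>S. (cd \<gamma>' p, cpar \<gamma>' p) = exec N r \<gamma> p"
      "\<forall>p. p \<notin> S \<longrightarrow> cd \<gamma>' p = cd \<gamma> p"
    and root: "cd \<gamma> r = cd \<gamma>' r"
    using assms unfolding dstep_def step_def by blast
  show ?thesis
  proof (cases "p \<in> S")
    case True
    then have "cd \<gamma>' p = fst (exec N r \<gamma> p)" using S(2) by (metis fst_conv)
    then show ?thesis using True S(1) root by (auto simp: exec_def)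
  qed (use S(3) in auto)
qed

lemma min_d_le: "finite V \<Longrightarrow> q \<in> V \<Longrightarrow> min_d V \<gamma> \<le> cd \<gamma> q"
  unfolding min_d_def by simp

lemma min_d_dstep_mono:
  assumes G: "bfs_graph V N r" and D: "dstep V N r \<gamma> \<gamma>'"
  shows "min_d V \<gamma> \<le> min_d V \<gamma>'"
proof -
  have "min_d V \<gamma> \<le> cd \<gamma>' q" if q: "q \<in> V" for q
    using dstep_cd_cases[OF D, of q]
  proof
    assume "cd \<gamma>' q = cd \<gamma> q"
    then show ?thesis using min_d_le[OF bfs_graph_finite[OF G] q] by simp
  next
    assume moved: "q \<in> V \<and> q \<noteq> r \<and> cd \<gamma>' q = Dist N \<gamma> q"
    then obtain q' where q': "q' \<in> set (N q)" and "Dist N \<gamma> q = cd \<gamma> q' + 1"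
      using bfs_graph_nonroot_has_nbr[OF G] Dist_attained by meson
    moreover have "min_d V \<gamma> \<le> cd \<gamma> q'"
      using min_d_le[OF bfs_graph_finite[OF G] bfs_graph_nbr_in_V[OF G q q']] .
    ultimately show ?thesis using moved by simp
  qed
  then show ?thesis
    using G unfolding min_d_def[of V \<gamma>'] bfs_graph_def by (intro Min.boundedI) auto
qed

lemma cd_le_top_lvl: "cd \<gamma> p \<le> top_lvl N r \<gamma> k p"
  by (cases k) auto

lemma top_lvl_dstep_antimono:
  assumes G: "bfs_graph V N r" and D: "dstep V N r \<gamma> \<gamma>'"
  shows "p \<in> V \<Longrightarrow> gdist N p r = k \<Longrightarrow> top_lvl N r \<gamma>' k p \<le> top_lvl N r \<gamma> k p"
proof (induction k arbitrary: p)
  case 0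
  then have "p = r" using gdist_eq_0_imp_root[OF G] by blast
  then show ?case using D by (simp add: dstep_def)
next
  case (Suc k)
  define L where "L = {q \<in> set (N p). gdist N q r = k}"
  have top_Suc: "top_lvl N r \<delta> (Suc k) p = max (cd \<delta> p) (1 + Min (top_lvl N r \<delta> k ` L))"
    for \<delta> unfolding L_def by (simp add: setcompr_eq_image)
  have L: "finite L" "L \<noteq> {}"
    using gdist_Suc_imp_nbr[OF G Suc.prems] by (auto simp: L_def)
  have "Min (top_lvl N r \<gamma> k ` L) \<in> top_lvl N r \<gamma> k ` L"
    using L by simp
  then obtain q where q: "q \<in> L" and Min_eq: "Min (top_lvl N r \<gamma> k ` L) = top_lvl N r \<gamma> k q"
    by blast
  have "Min (top_lvl N r \<gamma>' k ` L) \<le> top_lvl N r \<gamma>' k q"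
    using L(1) q by simp
  also have "\<dots> \<le> top_lvl N r \<gamma> k q"
    using q Suc.IH bfs_graph_nbr_in_V[OF G Suc.prems(1)] by (simp add: L_def)
  finally have Min_mono: "Min (top_lvl N r \<gamma>' k ` L) \<le> Min (top_lvl N r \<gamma> k ` L)"
    by (simp add: Min_eq)
  have "Dist N \<gamma> p \<le> 1 + Min (top_lvl N r \<gamma> k ` L)"
    using Dist_le[of q N p \<gamma>] cd_le_top_lvl[of \<gamma> q N r k] q[unfolded L_def] by (simp add: Min_eq)
  then have "cd \<gamma>' p \<le> max (cd \<gamma> p) (1 + Min (top_lvl N r \<gamma> k ` L))"
    using dstep_cd_cases[OF D, of p] by auto
  with Min_mono show ?case unfolding top_Suc by simp
qed

lemma le_d_trans: "le_d V \<gamma>1 \<gamma>2 \<Longrightarrow> le_d V \<gamma>2 \<gamma>3 \<Longrightarrow> le_d V \<gamma>1 \<gamma>3"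
  unfolding le_d_def by (meson order_trans)

lemma le_d_top_cfg: "le_d V \<gamma> (top_cfg N r \<gamma>)"
  by (simp add: le_d_def top_cfg_def cd_le_top_lvl)

lemma bot_cfg_le_d: "finite V \<Longrightarrow> le_d V (bot_cfg V \<gamma>) \<gamma>"
  by (simp add: le_d_def bot_cfg_def min_d_le)

lemma dstep_bot_top_mono:
  assumes "bfs_graph V N r" "dstep V N r \<gamma> \<gamma>'"
  shows "le_d V (bot_cfg V \<gamma>) (bot_cfg V \<gamma>')" "le_d V (top_cfg N r \<gamma>') (top_cfg N r \<gamma>)"
  using min_d_dstep_mono[OF assms] top_lvl_dstep_antimono[OF assms]
  by (auto simp: le_d_def bot_cfg_def top_cfg_def)

lemma dsteps_bot_top_mono:
  assumes G: "bfs_graph V N r" and "(dstep V N r)\<^sup>*\<^sup>* \<gamma>0 \<gamma>"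
  shows "le_d V (bot_cfg V \<gamma>0) (bot_cfg V \<gamma>) \<and> le_d V (top_cfg N r \<gamma>) (top_cfg N r \<gamma>0)"
  using assms(2)
proof (induction rule: rtranclp_induct)
  case (step \<gamma>1 \<gamma>2)
  then show ?case using dstep_bot_top_mono[OF G step.hyps(2)] by (meson le_d_trans)
qed (simp add: le_d_def)

theorem lemma4:
  fixes V :: "'v set" and N :: "'v \<Rightarrow> 'v list" and r :: 'v
  assumes "bfs_graph V N r"
  shows "(\<forall>\<gamma> \<gamma>'. is_config V N \<gamma> \<and> dstep V N r \<gamma> \<gamma>' \<longrightarrow>
            le_d V (bot_cfg V \<gamma>) (bot_cfg V \<gamma>') \<and>
            le_d V (top_cfg N r \<gamma>') (top_cfg N r \<gamma>))
       \<and> (\<forall>\<gamma>0 \<gamma>. is_config V N \<gamma>0 \<and> (dstep V N r)\<^sup>*\<^sup>* \<gamma>0 \<gamma> \<longrightarrow>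
            le_d V (bot_cfg V \<gamma>0) \<gamma> \<and> le_d V \<gamma> (top_cfg N r \<gamma>0))"
proof (intro conjI allI impI)
  fix \<gamma> \<gamma>' assume "is_config V N \<gamma> \<and> dstep V N r \<gamma> \<gamma>'"
  then show "le_d V (bot_cfg V \<gamma>) (bot_cfg V \<gamma>')" "le_d V (top_cfg N r \<gamma>') (top_cfg N r \<gamma>)"
    using dstep_bot_top_mono[OF assms] by auto
next
  fix \<gamma>0 \<gamma> assume "is_config V N \<gamma>0 \<and> (dstep V N r)\<^sup>*\<^sup>* \<gamma>0 \<gamma>"
  then have "le_d V (bot_cfg V \<gamma>0) (bot_cfg V \<gamma>)" "le_d V (top_cfg N r \<gamma>) (top_cfg N r \<gamma>0)"
    using dsteps_bot_top_mono[OF assms] by auto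
  then show "le_d V (bot_cfg V \<gamma>0) \<gamma>" "le_d V \<gamma> (top_cfg N r \<gamma>0)"
    using bot_cfg_le_d[OF bfs_graph_finite[OF assms], of \<gamma>] le_d_top_cfg[of V \<gamma> N r]
    by (auto intro: le_d_trans)
qed

end
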